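(* $\mathbb F_0\subsetneq\mathbb F_{\sqrt x}\cap\mathbb R$; that is, every origami number is constructible by compass and straightedge, but some real numbers constructible by compass and straightedge are not origami numbers.
   Context: An origami pair is a pair $(\mathcal P,\mathcal L)$ where $\mathcal P\subset\mathbb R^2$ is a set of points and $\mathcal L$ is a collection of lines in $\mathbb R^2$ such that: (i) the intersection point of any two non-parallel lines of $\mathcal L$ lies in $\mathcal P$; (ii) for any two distinct points of $\mathcal P$, the line through them is in $\mathcal L$; (iii) for any two distinct points of $\mathcal P$, the perpendicular bisector of the segment joining them is in $\mathcal L$; (iv) if $L_1,L_2\in\mathcal L$, then every line equidistant from $L_1$ and $L_2$ is in $\mathcal L$ (the midline if they are parallel, the angle bisectors if they intersect); (v) if $L_1,L_2\in\mathcal L$, then the mirror reflection of $L_2$ across $L_1$ is in $\mathcal L$. A set $\mathcal P\subset\mathbb R^2$ is closed under origami constructions if there is a collection of lines $\mathcal L$ with $(\mathcal P,\mathcal L)$ an origami pair. The set of origami constructible points is $\mathcal P_0=\bigcap\{\mathcal P : (0,0),(0,1)\in\mathcal P \text{ and } \mathcal P \text{ is closed under origami constructions}\}$. The set of origami numbers is $\mathbb F_0=\{\alpha\in\mathbb R : \exists v_1,v_2\in\mathcal P_0,\ |\alpha|=\operatorname{dist}(v_1,v_2)\}$. $\mathbb F_{\sqrt x}$ denotes the smallest subfield of $\mathbb C$ that contains a square root of each of its elements; $\mathbb F_{\sqrt x}\cap\mathbb R$ is the set of real numbers constructible by compass and straightedge. *)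

theory Defs
  imports "HOL-Analysis.Analysis"
begin

definition line_through :: "complex \<Rightarrow> complex \<Rightarrow> complex set" where
  "line_through a b = {a + complex_of_real t * (b - a) | t. True}"

definition is_line :: "complex set \<Rightarrow> bool" where
  "is_line L \<longleftrightarrow> (\<exists>a b. a \<noteq> b \<and> L = line_through a b)"

definition reflect_across :: "complex \<Rightarrow> complex \<Rightarrow> complex \<Rightarrow> complex" where
  "reflect_across a b z = a + ((b - a) / cnj (b - a)) * cnj (z - a)"

definition perp_bisector :: "complex \<Rightarrow> complex \<Rightarrow> complex set" where
  "perp_bisector p q = {z. dist z p = dist z q}"

definition origami_pair :: "complex set \<Rightarrow> complex set set \<Rightarrow> bool" where
  "origami_pair P \<L> \<longleftrightarrow>
     (\<forall>L\<in>\<L>. is_line L) \<and>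
     \<comment> \<open>(i) intersection point of two non-parallel lines\<close>
     (\<forall>L1\<in>\<L>. \<forall>L2\<in>\<L>. \<forall>p. L1 \<inter> L2 = {p} \<longrightarrow> p \<in> P) \<and>
     \<comment> \<open>(ii) line through two distinct points\<close>
     (\<forall>p\<in>P. \<forall>q\<in>P. p \<noteq> q \<longrightarrow> line_through p q \<in> \<L>) \<and>
     \<comment> \<open>(iii) perpendicular bisector\<close>
     (\<forall>p\<in>P. \<forall>q\<in>P. p \<noteq> q \<longrightarrow> perp_bisector p q \<in> \<L>) \<and>
     \<comment> \<open>(iv) every line equidistant from two distinct lines (midline / angle bisectors)\<close>
     (\<forall>L1\<in>\<L>. \<forall>L2\<in>\<L>. \<forall>L. L1 \<noteq> L2 \<and> is_line L \<and>
          L \<subseteq> {z. infdist z L1 = infdist z L2} \<longrightarrow> L \<in> \<L>) \<and>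
     \<comment> \<open>(v) mirror reflection of L2 across L1\<close>
     (\<forall>L1\<in>\<L>. \<forall>L2\<in>\<L>. \<forall>a b. a \<noteq> b \<and> L1 = line_through a b \<longrightarrow>
          reflect_across a b ` L2 \<in> \<L>)"

definition origami_closed :: "complex set \<Rightarrow> bool" where
  "origami_closed P \<longleftrightarrow> (\<exists>\<L>. origami_pair P \<L>)"

definition origami_points :: "complex set" where
  "origami_points = \<Inter>{P. 0 \<in> P \<and> \<i> \<in> P \<and> origami_closed P}"

definition origami_numbers :: "real set" where
  "origami_numbers = {\<alpha>. \<exists>v1\<in>origami_points. \<exists>v2\<in>origami_points. \<bar>\<alpha>\<bar> = dist v1 v2}"

definition is_subfield :: "complex set \<Rightarrow> bool" where
  "is_subfield K \<longleftrightarrow> 0 \<in> K \<and> 1 \<in> K \<and>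
     (\<forall>x\<in>K. \<forall>y\<in>K. x + y \<in> K \<and> x - y \<in> K \<and> x * y \<in> K) \<and>
     (\<forall>x\<in>K. x \<noteq> 0 \<longrightarrow> inverse x \<in> K)"

definition F_sqrt :: "complex set" where
  "F_sqrt = \<Inter>{K. is_subfield K \<and> (\<forall>z\<in>K. \<exists>w\<in>K. w\<^sup>2 = z)}"

end

theory Submission
  imports Defs
begin

(* Call a subfield S of the reals Pythagorean if sqrt (x^2 + y^2) lies in S whenever x and y do.
   The points with coordinates in S and the lines A x + B y = C with A, B, C in S form an origami
   pair: intersections, joins, perpendicular bisectors and reflections are rational in the data,
   and the bisectors of two lines only need the normalising factors sqrt (A^2 + B^2).  Hence every
   origami number lies in every Pythagorean field, in particular in the field of real
   constructible numbers.

   For strictness, extend the conjugation of Q(sqrt 2) sending sqrt 2 to -sqrt 2, by Zorn's lemma,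
   to a maximal embedding s of a subfield S of the reals into the reals.  S is Pythagorean:
   s (x^2 + y^2) = (s x)^2 + (s y)^2 >= 0 has a real square root, so s would otherwise extend to
   S (sqrt (x^2 + y^2)).  But sqrt (1 + sqrt 2) is not in S, as s would map its square to
   1 - sqrt 2 < 0. *)

section \<open>Lines in coordinates\<close>

definition line_eq :: "real \<Rightarrow> real \<Rightarrow> real \<Rightarrow> complex set" where
  "line_eq A B C = {z. A * Re z + B * Im z = C}"

lemma mem_line_through_iff:
  "z \<in> line_through a b \<longleftrightarrow>
     (\<exists>t. Re z = Re a + t * (Re b - Re a) \<and> Im z = Im a + t * (Im b - Im a))"
  unfolding line_through_def by (auto simp: complex_eq_iff)

lemma endpoints_mem_line_through: "a \<in> line_through a b" "b \<in> line_through a b"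
  unfolding mem_line_through_iff by (auto intro: exI[of _ 0] exI[of _ 1])

lemma line_eq_eq_line_through:
  fixes A B C :: real
  assumes AB: "A \<noteq> 0 \<or> B \<noteq> 0"
  defines "p \<equiv> Complex (C * A / (A\<^sup>2 + B\<^sup>2)) (C * B / (A\<^sup>2 + B\<^sup>2))"
  shows "line_eq A B C = line_through p (p + Complex (- B) A)"
proof (rule set_eqI)
  define n where "n = A\<^sup>2 + B\<^sup>2"
  have n: "n \<noteq> 0" using AB unfolding n_def by (simp add: sum_power2_eq_zero_iff)
  fix z
  have "z \<in> line_through p (p + Complex (- B) A) \<longleftrightarrow>
      (\<exists>t. Re z = C * A / n - t * B \<and> Im z = C * B / n + t * A)"
    unfolding mem_line_through_iff p_def n_def by simp
  also have "\<dots> \<longleftrightarrow> A * Re z + B * Im z = C"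
  proof
    assume "\<exists>t. Re z = C * A / n - t * B \<and> Im z = C * B / n + t * A"
    then obtain t where t: "Re z = C * A / n - t * B" "Im z = C * B / n + t * A" by blast
    have "A * Re z + B * Im z = C * (A\<^sup>2 + B\<^sup>2) / n"
      using n unfolding t by (simp add: field_simps power2_eq_square)
    with n show "A * Re z + B * Im z = C" unfolding n_def by simp
  next
    assume line: "A * Re z + B * Im z = C"
    have "Re z * n = C * A - (A * Im z - B * Re z) * B" "Im z * n = C * B + (A * Im z - B * Re z) * A"
      unfolding n_def line[symmetric] by (simp_all add: power2_eq_square algebra_simps)
    with n show "\<exists>t. Re z = C * A / n - t * B \<and> Im z = C * B / n + t * A"
      by (intro exI[of _ "(A * Im z - B * Re z) / n"]) (simp add: field_simps)
  qed
  finally show "z \<in> line_eq A B C \<longleftrightarrow> z \<in> line_through p (p + Complex (- B) A)"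
    unfolding line_eq_def by simp
qed

lemma line_through_subset_imp_eq:
  assumes "a \<noteq> b" "c \<noteq> d" and sub: "line_through a b \<subseteq> line_through c d"
  shows "line_through a b = line_through c d"
proof -
  have "a \<in> line_through c d" "b \<in> line_through c d"
    using sub endpoints_mem_line_through by auto
  then obtain t1 t2 where
    t1: "Re a = Re c + t1 * (Re d - Re c)" "Im a = Im c + t1 * (Im d - Im c)" and
    t2: "Re b = Re c + t2 * (Re d - Re c)" "Im b = Im c + t2 * (Im d - Im c)"
    unfolding mem_line_through_iff by blast
  have "t2 - t1 \<noteq> 0" using t1 t2 \<open>a \<noteq> b\<close> by (auto simp: complex_eq_iff)
  have "z \<in> line_through a b" if "z \<in> line_through c d" for z
  proof -
    obtain t where t: "Re z = Re c + t * (Re d - Re c)" "Im z = Im c + t * (Im d - Im c)"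
      using \<open>z \<in> line_through c d\<close> unfolding mem_line_through_iff by blast
    from \<open>t2 - t1 \<noteq> 0\<close> show ?thesis
      unfolding mem_line_through_iff t t1 t2
      by (intro exI[of _ "(t - t1) / (t2 - t1)"]) (simp add: field_simps)
  qed
  with sub show ?thesis by blast
qed

lemma line_through_subset_line_eq_imp_eq:
  assumes "p \<noteq> q" "A \<noteq> 0 \<or> B \<noteq> 0" and "line_through p q \<subseteq> line_eq A B C"
  shows "line_through p q = line_eq A B C"
proof -
  let ?p = "Complex (C * A / (A\<^sup>2 + B\<^sup>2)) (C * B / (A\<^sup>2 + B\<^sup>2))"
  have "?p \<noteq> ?p + Complex (- B) A" using assms(2) by (auto simp: complex_eq_iff)
  then show ?thesis
    using line_through_subset_imp_eq[OF \<open>p \<noteq> q\<close>] assms(3)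
    unfolding line_eq_eq_line_through[OF assms(2)] by blast
qed

lemma line_through_eq_line_eq:
  assumes "a \<noteq> b"
  shows "line_through a b =
    line_eq (Im a - Im b) (Re b - Re a) ((Im a - Im b) * Re a + (Re b - Re a) * Im a)"
proof (rule line_through_subset_line_eq_imp_eq[OF assms])
  show "Im a - Im b \<noteq> 0 \<or> Re b - Re a \<noteq> 0" using assms by (auto simp: complex_eq_iff)
  show "line_through a b \<subseteq>
      line_eq (Im a - Im b) (Re b - Re a) ((Im a - Im b) * Re a + (Re b - Re a) * Im a)"
  proof
    fix z assume "z \<in> line_through a b"
    then obtain t where t: "Re z = Re a + t * (Re b - Re a)" "Im z = Im a + t * (Im b - Im a)"
      unfolding mem_line_through_iff by blast
    show "z \<in> line_eq (Im a - Im b) (Re b - Re a) ((Im a - Im b) * Re a + (Re b - Re a) * Im a)"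
      unfolding line_eq_def mem_Collect_eq t by (simp add: algebra_simps)
  qed
qed

lemma line_through_subset_line_eq:
  assumes "t1 \<noteq> t2"
    and "p + of_real t1 * (q - p) \<in> line_eq A B C" "p + of_real t2 * (q - p) \<in> line_eq A B C"
  shows "line_through p q \<subseteq> line_eq A B C"
proof -
  define h where "h t = A * Re (p + of_real t * (q - p)) + B * Im (p + of_real t * (q - p)) - C" for t
  define k where "k = A * (Re q - Re p) + B * (Im q - Im p)"
  have h: "h t = h 0 + t * k" for t
    unfolding h_def k_def by (simp add: algebra_simps)
  have "h t1 = 0" "h t2 = 0" using assms(2,3) unfolding h_def line_eq_def by auto
  have "(t1 - t2) * k = h t1 - h t2" using h[of t1] h[of t2] by (simp add: algebra_simps)
  with \<open>h t1 = 0\<close> \<open>h t2 = 0\<close> \<open>t1 \<noteq> t2\<close> have "k = 0" by simp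
  with \<open>h t1 = 0\<close> have "h t = 0" for t using h[of t] h[of t1] by simp
  then show ?thesis unfolding line_through_def line_eq_def h_def by auto
qed

lemma dist_complex_coords: "dist z w = sqrt ((Re z - Re w)\<^sup>2 + (Im z - Im w)\<^sup>2)"
  by (simp add: dist_norm norm_complex_def)

lemma line_eq_scale: "k \<noteq> 0 \<Longrightarrow> line_eq (k * A) (k * B) (k * C) = line_eq A B C"
  unfolding line_eq_def by (simp add: mult.assoc flip: distrib_left)

lemma infdist_line_eq:
  assumes AB: "A \<noteq> 0 \<or> B \<noteq> 0"
  shows "infdist z (line_eq A B C) = \<bar>A * Re z + B * Im z - C\<bar> / sqrt (A\<^sup>2 + B\<^sup>2)"
proof -
  define n where "n = A\<^sup>2 + B\<^sup>2"
  define f where "f = A * Re z + B * Im z - C"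
  have n: "n > 0" using AB unfolding n_def by (simp add: sum_power2_gt_zero_iff)
  have lower: "\<bar>f\<bar> / sqrt n \<le> dist z v" if "v \<in> line_eq A B C" for v
  proof -
    have f: "f = A * (Re z - Re v) + B * (Im z - Im v)"
      using that unfolding f_def line_eq_def by (simp add: algebra_simps)
    \<comment> \<open>Lagrange's identity\<close>
    have "n * ((Re z - Re v)\<^sup>2 + (Im z - Im v)\<^sup>2) - f\<^sup>2 = (A * (Im z - Im v) - B * (Re z - Re v))\<^sup>2"
      unfolding f n_def by (simp add: power2_eq_square algebra_simps)
    then have "f\<^sup>2 \<le> n * (dist z v)\<^sup>2"
      unfolding dist_complex_coords by simp (metis diff_ge_0_iff_ge zero_le_power2)
    then have "sqrt (f\<^sup>2) \<le> sqrt n * dist z v"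
      by (metis real_sqrt_abs real_sqrt_le_mono real_sqrt_mult zero_le_dist abs_of_nonneg)
    with n show ?thesis by (simp add: divide_le_eq mult.commute)
  qed
  define w where "w = z - Complex (f * A / n) (f * B / n)"
  have "A * Re w + B * Im w = A * Re z + B * Im z - f * (A\<^sup>2 + B\<^sup>2) / n"
    using n unfolding w_def by (simp add: field_simps power2_eq_square)
  also have "\<dots> = C" using n unfolding n_def[symmetric] f_def by simp
  finally have w: "w \<in> line_eq A B C" unfolding line_eq_def by simp
  have "dist z w = \<bar>f\<bar> / sqrt n"
  proof -
    have "dist z w = sqrt (f\<^sup>2 * n / n\<^sup>2)"
      unfolding w_def dist_complex_coords n_def
      by (simp add: power_divide power_mult_distrib add_divide_distrib distrib_left)
    also have "\<dots> = \<bar>f\<bar> / sqrt n"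
      using n by (simp add: power2_eq_square real_sqrt_divide)
    finally show ?thesis .
  qed
  moreover have "line_eq A B C \<noteq> {}" using w by blast
  ultimately have "infdist z (line_eq A B C) = \<bar>f\<bar> / sqrt n"
    using lower by (intro antisym infdist_le2[OF w]) (simp_all add: infdist_notempty cINF_greatest)
  then show ?thesis unfolding f_def n_def .
qed

lemma perp_bisector_eq_line_eq:
  "perp_bisector p q = line_eq (2 * (Re q - Re p)) (2 * (Im q - Im p))
     ((Re q)\<^sup>2 + (Im q)\<^sup>2 - (Re p)\<^sup>2 - (Im p)\<^sup>2)"
proof (rule set_eqI)
  fix z
  have "((Re z - Re p)\<^sup>2 + (Im z - Im p)\<^sup>2) - ((Re z - Re q)\<^sup>2 + (Im z - Im q)\<^sup>2) =
      2 * (Re q - Re p) * Re z + 2 * (Im q - Im p) * Im z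
      - ((Re q)\<^sup>2 + (Im q)\<^sup>2 - (Re p)\<^sup>2 - (Im p)\<^sup>2)"
    by (simp add: power2_eq_square algebra_simps)
  then show "z \<in> perp_bisector p q \<longleftrightarrow> z \<in> line_eq (2 * (Re q - Re p)) (2 * (Im q - Im p))
      ((Re q)\<^sup>2 + (Im q)\<^sup>2 - (Re p)\<^sup>2 - (Im p)\<^sup>2)"
    unfolding perp_bisector_def line_eq_def mem_Collect_eq dist_complex_coords real_sqrt_eq_iff
    by linarith
qed

lemma reflect_across_cong:
  assumes "a \<noteq> b" "a' \<noteq> b'" and eq: "line_through a b = line_through a' b'"
  shows "reflect_across a b = reflect_across a' b'"
proof
  have "a' \<in> line_through a b" "b' \<in> line_through a b"
    using endpoints_mem_line_through eq by auto
  then obtain t1 t2 where t1: "a' = a + of_real t1 * (b - a)" and t2: "b' = a + of_real t2 * (b - a)"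
    unfolding line_through_def by blast
  define d where "d = b - a"
  have d: "d \<noteq> 0" using \<open>a \<noteq> b\<close> unfolding d_def by simp
  have "b' - a' = of_real (t2 - t1) * d" unfolding t1 t2 d_def by (simp add: algebra_simps)
  moreover have "t1 \<noteq> t2" using \<open>a' \<noteq> b'\<close> t1 t2 by auto
  ultimately have "(b' - a') / cnj (b' - a') = d / cnj d" by simp
  fix z
  have "reflect_across a' b' z = a' + (d / cnj d) * cnj (z - a')"
    unfolding reflect_across_def \<open>(b' - a') / cnj (b' - a') = d / cnj d\<close> ..
  also have "\<dots> = a + (d / cnj d) * cnj (z - a)"
    using d unfolding t1 d_def[symmetric] by (simp add: field_simps)
  also have "\<dots> = reflect_across a b z" unfolding reflect_across_def d_def ..
  finally show "reflect_across a b z = reflect_across a' b' z" by simp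
qed

lemma reflect_across_involution:
  assumes "a \<noteq> b"
  shows "reflect_across a b (reflect_across a b z) = z"
proof -
  define w where "w = (b - a) / cnj (b - a)"
  have "w * cnj w = 1" using assms unfolding w_def by simp
  then show ?thesis unfolding reflect_across_def w_def[symmetric]
    by (simp add: mult.assoc[symmetric])
qed

lemma reflect_across_image_line_eq:
  assumes "a \<noteq> b" and AB: "A \<noteq> 0 \<or> B \<noteq> 0"
  defines "w \<equiv> (b - a) / cnj (b - a)"
  defines "A' \<equiv> A * Re w + B * Im w" and "B' \<equiv> A * Im w - B * Re w"
  shows "reflect_across a b ` line_eq A B C =
      line_eq A' B' (C - A * Re a - B * Im a + A' * Re a + B' * Im a)"
    and "A' \<noteq> 0 \<or> B' \<noteq> 0"
proof -
  let ?R = "reflect_across a b"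
  have R: "Re (?R z) = Re a + Re w * (Re z - Re a) + Im w * (Im z - Im a)"
    "Im (?R z) = Im a + Im w * (Re z - Re a) - Re w * (Im z - Im a)" for z
    unfolding reflect_across_def w_def[symmetric] by (simp_all add: algebra_simps)
  have "?R ` line_eq A B C = {z. ?R z \<in> line_eq A B C}"
    using reflect_across_involution[OF \<open>a \<noteq> b\<close>] by (auto intro: image_eqI[of _ ?R "?R _"])
  also have "\<dots> = line_eq A' B' (C - A * Re a - B * Im a + A' * Re a + B' * Im a)"
    unfolding A'_def B'_def by (auto simp: line_eq_def R algebra_simps)
  finally show "?R ` line_eq A B C =
      line_eq A' B' (C - A * Re a - B * Im a + A' * Re a + B' * Im a)" .
  have "cmod w = 1"
    using \<open>a \<noteq> b\<close> unfolding w_def by (simp add: norm_divide del: complex_cnj_diff)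
  then have "(Re w)\<^sup>2 + (Im w)\<^sup>2 = 1" by (simp flip: cmod_power2)
  then have "A = Re w * A' + Im w * B'" "B = Im w * A' - Re w * B'"
    unfolding A'_def B'_def by (simp_all add: algebra_simps power2_eq_square flip: distrib_left)
  with AB show "A' \<noteq> 0 \<or> B' \<noteq> 0" by auto
qed

lemma equidistant_line_subset_bisector:
  assumes AB1: "A1 \<noteq> 0 \<or> B1 \<noteq> 0" and AB2: "A2 \<noteq> 0 \<or> B2 \<noteq> 0" and "is_line L"
    and L: "L \<subseteq> {z. infdist z (line_eq A1 B1 C1) = infdist z (line_eq A2 B2 C2)}"
  defines "n1 \<equiv> sqrt (A1\<^sup>2 + B1\<^sup>2)" and "n2 \<equiv> sqrt (A2\<^sup>2 + B2\<^sup>2)"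
  obtains s :: real where "s = 1 \<or> s = -1"
    and "L \<subseteq> line_eq (A1 / n1 - s * A2 / n2) (B1 / n1 - s * B2 / n2) (C1 / n1 - s * C2 / n2)"
proof -
  obtain p q where "p \<noteq> q" and L_eq: "L = line_through p q"
    using \<open>is_line L\<close> unfolding is_line_def by blast
  have "n1 > 0" "n2 > 0"
    using AB1 AB2 unfolding n1_def n2_def by (simp_all add: sum_power2_gt_zero_iff)
  define f1 where "f1 z = A1 * Re z + B1 * Im z - C1" for z
  define f2 where "f2 z = A2 * Re z + B2 * Im z - C2" for z
  define Z where "Z s = line_eq (A1 / n1 - s * A2 / n2) (B1 / n1 - s * B2 / n2) (C1 / n1 - s * C2 / n2)"
    for s :: real
  have Z: "z \<in> Z s \<longleftrightarrow> f1 z / n1 = s * (f2 z / n2)" for z s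
    unfolding Z_def line_eq_def f1_def f2_def
    by (simp add: diff_divide_distrib add_divide_distrib algebra_simps)
  define zt where "zt t = p + of_real t * (q - p)" for t
  have on_bisectors: "zt t \<in> Z 1 \<or> zt t \<in> Z (-1)" for t
  proof -
    have "zt t \<in> L" unfolding L_eq zt_def line_through_def by blast
    with L have "\<bar>f1 (zt t)\<bar> / n1 = \<bar>f2 (zt t)\<bar> / n2"
      unfolding infdist_line_eq[OF AB1] infdist_line_eq[OF AB2] f1_def f2_def n1_def n2_def by blast
    with \<open>n1 > 0\<close> \<open>n2 > 0\<close> have "\<bar>f1 (zt t) / n1\<bar> = \<bar>f2 (zt t) / n2\<bar>" by simp
    then show ?thesis unfolding Z by arith
  qed
  have "(0::real) \<noteq> 1" "(0::real) \<noteq> 2" "(1::real) \<noteq> 2" by simp_all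
  then obtain s t1 t2 where "s = 1 \<or> s = -1" "t1 \<noteq> t2" "zt t1 \<in> Z s" "zt t2 \<in> Z s"
    using on_bisectors[of 0] on_bisectors[of 1] on_bisectors[of 2] by blast
  moreover have "L \<subseteq> Z s"
    unfolding L_eq Z_def by (rule line_through_subset_line_eq[OF \<open>t1 \<noteq> t2\<close>])
      (use \<open>zt t1 \<in> Z s\<close> \<open>zt t2 \<in> Z s\<close> in \<open>simp_all add: zt_def Z_def\<close>)
  ultimately show thesis using that unfolding Z_def by blast
qed

section \<open>Pythagorean fields are closed under origami constructions\<close>

locale pythagorean_field =
  fixes S :: "real set"
  assumes zero_mem: "0 \<in> S" and one_mem: "1 \<in> S"
    and add_mem: "x \<in> S \<Longrightarrow> y \<in> S \<Longrightarrow> x + y \<in> S"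
    and mult_mem: "x \<in> S \<Longrightarrow> y \<in> S \<Longrightarrow> x * y \<in> S"
    and uminus_mem: "x \<in> S \<Longrightarrow> - x \<in> S"
    and inverse_mem: "x \<in> S \<Longrightarrow> inverse x \<in> S"
    and sqrt_sum_squares_mem: "x \<in> S \<Longrightarrow> y \<in> S \<Longrightarrow> sqrt (x\<^sup>2 + y\<^sup>2) \<in> S"
begin

lemma diff_mem: "x \<in> S \<Longrightarrow> y \<in> S \<Longrightarrow> x - y \<in> S"
  using add_mem[of x "- y"] uminus_mem[of y] by simp

lemma divide_mem: "x \<in> S \<Longrightarrow> y \<in> S \<Longrightarrow> x / y \<in> S"
  using mult_mem[of x "inverse y"] inverse_mem[of y] by (simp add: divide_inverse)

lemma power2_mem: "x \<in> S \<Longrightarrow> x\<^sup>2 \<in> S"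
  using mult_mem[of x x] by (simp add: power2_eq_square)

lemma two_mem: "2 \<in> S"
  using add_mem[OF one_mem one_mem] by simp

lemmas closure_mems = zero_mem one_mem two_mem add_mem mult_mem uminus_mem inverse_mem
  diff_mem divide_mem power2_mem sqrt_sum_squares_mem

definition points :: "complex set" where
  "points = {z. Re z \<in> S \<and> Im z \<in> S}"

definition lines :: "complex set set" where
  "lines = {line_eq A B C | A B C. (A \<noteq> 0 \<or> B \<noteq> 0) \<and> A \<in> S \<and> B \<in> S \<and> C \<in> S}"

lemma line_eq_mem_lines:
  "A \<noteq> 0 \<or> B \<noteq> 0 \<Longrightarrow> A \<in> S \<Longrightarrow> B \<in> S \<Longrightarrow> C \<in> S \<Longrightarrow> line_eq A B C \<in> lines"
  unfolding lines_def by blast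

lemma linesE:
  assumes "L \<in> lines"
  obtains A B C where "L = line_eq A B C" "A \<noteq> 0 \<or> B \<noteq> 0" "A \<in> S" "B \<in> S" "C \<in> S"
  using assms unfolding lines_def by blast

lemma lines_through_points:
  assumes "L \<in> lines"
  obtains a b where "a \<noteq> b" "a \<in> points" "b \<in> points" "L = line_through a b"
proof -
  obtain A B C where L: "L = line_eq A B C" and AB: "A \<noteq> 0 \<or> B \<noteq> 0" and "A \<in> S" "B \<in> S" "C \<in> S"
    using assms by (rule linesE)
  let ?a = "Complex (C * A / (A\<^sup>2 + B\<^sup>2)) (C * B / (A\<^sup>2 + B\<^sup>2))"
  have "?a \<noteq> ?a + Complex (- B) A" using AB by (auto simp: complex_eq_iff)
  moreover have "?a \<in> points" "?a + Complex (- B) A \<in> points"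
    unfolding points_def using \<open>A \<in> S\<close> \<open>B \<in> S\<close> \<open>C \<in> S\<close> by (auto intro!: closure_mems)
  ultimately show thesis using that L line_eq_eq_line_through[OF AB] by metis
qed

lemma is_line_if_mem_lines: "L \<in> lines \<Longrightarrow> is_line L"
  unfolding is_line_def by (metis lines_through_points)

lemma intersection_mem_points:
  assumes "L1 \<in> lines" "L2 \<in> lines" and meet: "L1 \<inter> L2 = {p}"
  shows "p \<in> points"
proof -
  obtain A1 B1 C1 where L1: "L1 = line_eq A1 B1 C1" and AB1: "A1 \<noteq> 0 \<or> B1 \<noteq> 0"
    and S1: "A1 \<in> S" "B1 \<in> S" "C1 \<in> S"
    using assms(1) by (rule linesE)
  obtain A2 B2 C2 where L2: "L2 = line_eq A2 B2 C2" and S2: "A2 \<in> S" "B2 \<in> S" "C2 \<in> S"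
    using assms(2) by (rule linesE)
  have e1: "A1 * Re p + B1 * Im p = C1" and e2: "A2 * Re p + B2 * Im p = C2"
    using meet unfolding L1 L2 line_eq_def by auto
  define D where "D = A1 * B2 - A2 * B1"
  have "D \<noteq> 0"
  proof
    assume "D = 0"
    \<comment> \<open>then the lines are parallel, so the direction of \<open>L1\<close> moves \<open>p\<close> inside \<open>L1 \<inter> L2\<close>\<close>
    with e1 e2 have "p + Complex (- B1) A1 \<in> L1 \<inter> L2"
      unfolding L1 L2 line_eq_def D_def by (simp add: algebra_simps)
    with meet AB1 show False by (auto simp: complex_eq_iff)
  qed
  have "Re p * D = C1 * B2 - C2 * B1" "Im p * D = A1 * C2 - A2 * C1"
    unfolding D_def e1[symmetric] e2[symmetric] by (simp_all add: algebra_simps)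
  with \<open>D \<noteq> 0\<close> have "Re p = (C1 * B2 - C2 * B1) / D" "Im p = (A1 * C2 - A2 * C1) / D"
    by (simp_all add: field_simps)
  then show ?thesis unfolding points_def D_def using S1 S2 by (simp add: closure_mems)
qed

lemma line_through_mem_lines:
  assumes "a \<in> points" "b \<in> points" "a \<noteq> b"
  shows "line_through a b \<in> lines"
  unfolding line_through_eq_line_eq[OF \<open>a \<noteq> b\<close>]
  using assms by (intro line_eq_mem_lines) (auto simp: points_def complex_eq_iff intro!: closure_mems)

lemma perp_bisector_mem_lines:
  assumes "a \<in> points" "b \<in> points" "a \<noteq> b"
  shows "perp_bisector a b \<in> lines"
  unfolding perp_bisector_eq_line_eq
  using assms by (intro line_eq_mem_lines) (auto simp: points_def complex_eq_iff intro!: closure_mems)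

lemma reflect_across_image_mem_lines:
  assumes "a \<in> points" "b \<in> points" "a \<noteq> b" and "L \<in> lines"
  shows "reflect_across a b ` L \<in> lines"
proof -
  obtain A B C where L: "L = line_eq A B C" and AB: "A \<noteq> 0 \<or> B \<noteq> 0" and "A \<in> S" "B \<in> S" "C \<in> S"
    using assms(4) by (rule linesE)
  define w where "w = (b - a) / cnj (b - a)"
  note image = reflect_across_image_line_eq[OF \<open>a \<noteq> b\<close> AB, folded w_def]
  have "Re w \<in> S" "Im w \<in> S"
    using assms(1,2) unfolding w_def points_def by (auto simp: Re_divide Im_divide intro!: closure_mems)
  with assms(1) \<open>A \<in> S\<close> \<open>B \<in> S\<close> \<open>C \<in> S\<close> show ?thesis
    unfolding L image(1) using image(2)
    by (intro line_eq_mem_lines) (auto simp: points_def intro!: closure_mems)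
qed

lemma equidistant_line_mem_lines:
  assumes "L1 \<in> lines" "L2 \<in> lines" "L1 \<noteq> L2" "is_line L"
    and L: "L \<subseteq> {z. infdist z L1 = infdist z L2}"
  shows "L \<in> lines"
proof -
  obtain A1 B1 C1 where L1: "L1 = line_eq A1 B1 C1" and AB1: "A1 \<noteq> 0 \<or> B1 \<noteq> 0"
    and S1: "A1 \<in> S" "B1 \<in> S" "C1 \<in> S"
    using assms(1) by (rule linesE)
  obtain A2 B2 C2 where L2: "L2 = line_eq A2 B2 C2" and AB2: "A2 \<noteq> 0 \<or> B2 \<noteq> 0"
    and S2: "A2 \<in> S" "B2 \<in> S" "C2 \<in> S"
    using assms(2) by (rule linesE)
  obtain p q where "p \<noteq> q" and L_eq: "L = line_through p q"
    using \<open>is_line L\<close> unfolding is_line_def by blast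
  define n1 where "n1 = sqrt (A1\<^sup>2 + B1\<^sup>2)"
  define n2 where "n2 = sqrt (A2\<^sup>2 + B2\<^sup>2)"
  have "n1 > 0" "n2 > 0"
    using AB1 AB2 unfolding n1_def n2_def by (simp_all add: sum_power2_gt_zero_iff)
  obtain s :: real where s: "s = 1 \<or> s = -1"
    and sub: "L \<subseteq> line_eq (A1 / n1 - s * A2 / n2) (B1 / n1 - s * B2 / n2) (C1 / n1 - s * C2 / n2)"
    using equidistant_line_subset_bisector[OF AB1 AB2 \<open>is_line L\<close> L[unfolded L1 L2]]
    unfolding n1_def n2_def by blast
  show ?thesis
  proof (cases "A1 / n1 - s * A2 / n2 = 0 \<and> B1 / n1 - s * B2 / n2 = 0")
    case True
    have "p \<in> line_eq (A1 / n1 - s * A2 / n2) (B1 / n1 - s * B2 / n2) (C1 / n1 - s * C2 / n2)"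
      using sub L_eq endpoints_mem_line_through by blast
    with True have "C1 / n1 - s * C2 / n2 = 0" unfolding line_eq_def by (simp split: if_splits)
    define k where "k = s * n1 / n2"
    have "k \<noteq> 0" using s \<open>n1 > 0\<close> \<open>n2 > 0\<close> unfolding k_def by auto
    from True \<open>C1 / n1 - s * C2 / n2 = 0\<close> \<open>n1 > 0\<close> \<open>n2 > 0\<close>
    have "A1 = k * A2" "B1 = k * B2" "C1 = k * C2" unfolding k_def by (simp_all add: field_simps)
    with \<open>k \<noteq> 0\<close> have "L1 = L2" unfolding L1 L2 by (simp add: line_eq_scale)
    with \<open>L1 \<noteq> L2\<close> show ?thesis by contradiction
  next
    case False
    moreover have "A1 / n1 - s * A2 / n2 \<in> S" "B1 / n1 - s * B2 / n2 \<in> S" "C1 / n1 - s * C2 / n2 \<in> S"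
      using s S1 S2 unfolding n1_def n2_def by (auto intro!: closure_mems)
    ultimately show ?thesis
      using sub \<open>p \<noteq> q\<close> L_eq line_through_subset_line_eq_imp_eq line_eq_mem_lines by metis
  qed
qed

lemma origami_pair_points_lines: "origami_pair points lines"
  unfolding origami_pair_def
proof (intro conjI ballI allI impI)
  fix L1 L2 a b assume "L1 \<in> lines" "L2 \<in> lines" "a \<noteq> b \<and> L1 = line_through a b"
  then obtain a' b' where "a' \<noteq> b'" "a' \<in> points" "b' \<in> points" "L1 = line_through a' b'"
    using lines_through_points by metis
  with \<open>a \<noteq> b \<and> L1 = line_through a b\<close> have "reflect_across a b = reflect_across a' b'"
    using reflect_across_cong by metis
  with \<open>L2 \<in> lines\<close> show "reflect_across a b ` L2 \<in> lines"
    using reflect_across_image_mem_lines \<open>a' \<noteq> b'\<close> \<open>a' \<in> points\<close> \<open>b' \<in> points\<close> by simp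
qed (auto intro: is_line_if_mem_lines intersection_mem_points line_through_mem_lines
    perp_bisector_mem_lines equidistant_line_mem_lines)

lemma origami_numbers_subset: "origami_numbers \<subseteq> S"
proof
  have "origami_closed points"
    unfolding origami_closed_def using origami_pair_points_lines by blast
  moreover have "0 \<in> points" "\<i> \<in> points" unfolding points_def using zero_mem one_mem by auto
  ultimately have origami_points: "origami_points \<subseteq> points" unfolding origami_points_def by blast
  fix x assume "x \<in> origami_numbers"
  then obtain v1 v2 where "v1 \<in> points" "v2 \<in> points" and x: "\<bar>x\<bar> = dist v1 v2"
    unfolding origami_numbers_def using origami_points by blast
  then have "\<bar>x\<bar> \<in> S"
    unfolding dist_complex_coords points_def by (auto intro!: closure_mems)
  then show "x \<in> S" by (cases "x \<ge> 0") (auto dest: uminus_mem)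
qed

end

section \<open>Constructible numbers\<close>

lemma is_subfield_F_sqrt: "is_subfield F_sqrt"
  unfolding F_sqrt_def is_subfield_def by auto

lemma of_real_sqrt_mem_F_sqrt:
  assumes "t \<ge> 0" and t: "complex_of_real t \<in> F_sqrt"
  shows "complex_of_real (sqrt t) \<in> F_sqrt"
  unfolding F_sqrt_def
proof (intro InterI, clarify)
  fix K assume K: "is_subfield K" "\<forall>z\<in>K. \<exists>w\<in>K. w\<^sup>2 = z"
  with t obtain w where "w \<in> K" "w\<^sup>2 = complex_of_real t" unfolding F_sqrt_def by blast
  moreover have "(complex_of_real (sqrt t))\<^sup>2 = complex_of_real t"
    using \<open>t \<ge> 0\<close> by (simp flip: of_real_power)
  ultimately have "w = complex_of_real (sqrt t) \<or> w = - complex_of_real (sqrt t)"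
    by (metis power2_eq_iff)
  moreover have "0 - w \<in> K" using K(1) \<open>w \<in> K\<close> unfolding is_subfield_def by blast
  ultimately show "complex_of_real (sqrt t) \<in> K" using \<open>w \<in> K\<close> by auto
qed

lemma F_sqrt_closed:
  "0 \<in> F_sqrt" "1 \<in> F_sqrt"
  "x \<in> F_sqrt \<Longrightarrow> y \<in> F_sqrt \<Longrightarrow> x + y \<in> F_sqrt"
  "x \<in> F_sqrt \<Longrightarrow> y \<in> F_sqrt \<Longrightarrow> x - y \<in> F_sqrt"
  "x \<in> F_sqrt \<Longrightarrow> y \<in> F_sqrt \<Longrightarrow> x * y \<in> F_sqrt"
  "x \<in> F_sqrt \<Longrightarrow> inverse x \<in> F_sqrt"
  using is_subfield_F_sqrt unfolding is_subfield_def by (auto simp del: inverse_nonzero_iff_nonzero)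

lemma pythagorean_field_constructible: "pythagorean_field {x. complex_of_real x \<in> F_sqrt}"
proof unfold_locales
  fix x y assume "x \<in> {x. complex_of_real x \<in> F_sqrt}" "y \<in> {x. complex_of_real x \<in> F_sqrt}"
  then have x: "complex_of_real x \<in> F_sqrt" and y: "complex_of_real y \<in> F_sqrt" by simp_all
  show "x + y \<in> {x. complex_of_real x \<in> F_sqrt}" "x * y \<in> {x. complex_of_real x \<in> F_sqrt}"
    using F_sqrt_closed(3,5)[OF x y] by simp_all
  have "complex_of_real (x\<^sup>2 + y\<^sup>2) \<in> F_sqrt"
    using F_sqrt_closed(3)[OF F_sqrt_closed(5)[OF x x] F_sqrt_closed(5)[OF y y]]
    by (simp add: power2_eq_square)
  then show "sqrt (x\<^sup>2 + y\<^sup>2) \<in> {x. complex_of_real x \<in> F_sqrt}"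
    by (simp add: of_real_sqrt_mem_F_sqrt)
next
  fix x assume "x \<in> {x. complex_of_real x \<in> F_sqrt}"
  then have x: "complex_of_real x \<in> F_sqrt" by simp
  show "- x \<in> {x. complex_of_real x \<in> F_sqrt}" using F_sqrt_closed(4)[OF F_sqrt_closed(1) x] by simp
  show "inverse x \<in> {x. complex_of_real x \<in> F_sqrt}" using F_sqrt_closed(6)[OF x] by simp
qed (use F_sqrt_closed in simp_all)

lemma sqrt_1_plus_sqrt_2_constructible: "complex_of_real (sqrt (1 + sqrt 2)) \<in> F_sqrt"
proof -
  have "complex_of_real 2 \<in> F_sqrt" using F_sqrt_closed(3)[OF F_sqrt_closed(2) F_sqrt_closed(2)] by simp
  then have "complex_of_real (sqrt 2) \<in> F_sqrt" by (rule of_real_sqrt_mem_F_sqrt[rotated]) simp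
  then have "complex_of_real (1 + sqrt 2) \<in> F_sqrt" using F_sqrt_closed(3)[OF F_sqrt_closed(2)] by simp
  then show ?thesis by (rule of_real_sqrt_mem_F_sqrt[rotated]) simp
qed

section \<open>A Pythagorean field without \<open>sqrt (1 + sqrt 2)\<close>\<close>

lemma sqrt_2_not_rat: "sqrt 2 \<notin> \<rat>"
proof
  assume "sqrt 2 \<in> \<rat>"
  then obtain m n :: nat where "n \<noteq> 0" "\<bar>sqrt 2\<bar> = m / n" "coprime m n"
    by (rule Rats_abs_nat_div_natE)
  then have "real m = sqrt 2 * n" by (simp add: field_simps)
  then have "real (m\<^sup>2) = real (2 * n\<^sup>2)" by (simp add: power_mult_distrib)
  then have m: "m\<^sup>2 = 2 * n\<^sup>2" by (simp only: of_nat_eq_iff)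
  then have "even (m\<^sup>2)" by simp
  then have "even m" by simp
  then obtain k where "m = 2 * k" by blast
  with m have "n\<^sup>2 = 2 * k\<^sup>2" by (simp add: power2_eq_square)
  then have "even (n\<^sup>2)" by simp
  then have "even n" by simp
  with \<open>even m\<close> \<open>coprime m n\<close> show False by auto
qed

(* The graph G of a field embedding of the subfield Domain G into the reals; graphs rather than
   functions, so that Zorn's lemma applies to them ordered by inclusion. *)
locale field_hom_graph =
  fixes G :: "(real \<times> real) set"
  assumes graph_single_valued: "single_valued G"
    and one_mem: "(1, 1) \<in> G"
    and add_mem: "(x, x') \<in> G \<Longrightarrow> (y, y') \<in> G \<Longrightarrow> (x + y, x' + y') \<in> G"
    and mult_mem: "(x, x') \<in> G \<Longrightarrow> (y, y') \<in> G \<Longrightarrow> (x * y, x' * y') \<in> G"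
    and uminus_mem: "(x, x') \<in> G \<Longrightarrow> (- x, - x') \<in> G"
    and inverse_mem: "(x, x') \<in> G \<Longrightarrow> (inverse x, inverse x') \<in> G"
begin

lemma image_unique: "(x, y) \<in> G \<Longrightarrow> (x, z) \<in> G \<Longrightarrow> y = z"
  using graph_single_valued by (rule single_valuedD)

lemma zero_mem: "(0, 0) \<in> G"
  using add_mem[OF one_mem uminus_mem[OF one_mem]] by simp

lemma diff_mem: "(x, x') \<in> G \<Longrightarrow> (y, y') \<in> G \<Longrightarrow> (x - y, x' - y') \<in> G"
  using add_mem[OF _ uminus_mem, of x x' y y'] by simp

lemma divide_mem: "(x, x') \<in> G \<Longrightarrow> (y, y') \<in> G \<Longrightarrow> (x / y, x' / y') \<in> G"
  using mult_mem[OF _ inverse_mem, of x x' y y'] by (simp add: divide_inverse)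

lemma image_nonzero:
  assumes "(x, x') \<in> G" "x \<noteq> 0"
  shows "x' \<noteq> 0"
proof
  assume "x' = 0"
  with assms have "(1, 0) \<in> G" using divide_mem[OF assms(1) assms(1)] by simp
  with one_mem show False using image_unique by force
qed

definition adjoin :: "real \<Rightarrow> real \<Rightarrow> (real \<times> real) set" where
  "adjoin r r' = {(x + y * r, x' + y' * r') | x x' y y'. (x, x') \<in> G \<and> (y, y') \<in> G}"

lemma adjoin_memI: "(x, x') \<in> G \<Longrightarrow> (y, y') \<in> G \<Longrightarrow> (x + y * r, x' + y' * r') \<in> adjoin r r'"
  unfolding adjoin_def by blast

lemma adjoin_memE:
  assumes "(a, a') \<in> adjoin r r'"
  obtains x x' y y' where "a = x + y * r" "a' = x' + y' * r'" "(x, x') \<in> G" "(y, y') \<in> G"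
  using assms unfolding adjoin_def by blast

lemma subset_adjoin: "G \<subseteq> adjoin r r'"
  using adjoin_memI[OF _ zero_mem] by auto

lemma generator_mem_adjoin: "(r, r') \<in> adjoin r r'"
  using adjoin_memI[OF zero_mem one_mem] by simp

lemma adjoin_coeffs_unique:
  assumes "r \<notin> Domain G" "(x1, x1') \<in> G" "(y1, y1') \<in> G" "(x2, x2') \<in> G" "(y2, y2') \<in> G"
    and eq: "x1 + y1 * r = x2 + y2 * r"
  shows "x1 = x2" "y1 = y2"
proof -
  show "y1 = y2"
  proof (rule ccontr)
    assume "y1 \<noteq> y2"
    with eq have "r = (x2 - x1) / (y1 - y2)" by (simp add: field_simps)
    moreover have "((x2 - x1) / (y1 - y2), (x2' - x1') / (y1' - y2')) \<in> G"
      using assms(2-5) by (intro divide_mem diff_mem)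
    ultimately show False using \<open>r \<notin> Domain G\<close> by force
  qed
  with eq show "x1 = x2" by simp
qed

lemma single_valued_adjoin:
  assumes "r \<notin> Domain G"
  shows "single_valued (adjoin r r')"
proof (rule single_valuedI)
  fix a a1' a2' assume "(a, a1') \<in> adjoin r r'" "(a, a2') \<in> adjoin r r'"
  then obtain x1 x1' y1 y1' x2 x2' y2 y2' where
    "a = x1 + y1 * r" "a1' = x1' + y1' * r'" "(x1, x1') \<in> G" "(y1, y1') \<in> G"
    "a = x2 + y2 * r" "a2' = x2' + y2' * r'" "(x2, x2') \<in> G" "(y2, y2') \<in> G"
    by (metis adjoin_memE)
  then show "a1' = a2'" using adjoin_coeffs_unique[OF assms] image_unique by metis
qed

lemma adjoin_norm_nonzero:
  assumes "r \<notin> Domain G" "(x, x') \<in> G" "(y, y') \<in> G" and "x + y * r \<noteq> 0"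
  shows "x * x - y * y * (r * r) \<noteq> 0"
proof
  assume N: "x * x - y * y * (r * r) = 0"
  show False
  proof (cases "y = 0")
    case True
    with N \<open>x + y * r \<noteq> 0\<close> show False by simp
  next
    case False
    with N have "(r - x / y) * (r + x / y) = 0" by (simp add: field_simps)
    then have "r = x / y \<or> r = - (x / y)" by (auto simp: add_eq_0_iff)
    moreover have "(x / y, x' / y') \<in> G" "(- (x / y), - (x' / y')) \<in> G"
      using divide_mem[OF assms(2,3)] uminus_mem[OF divide_mem[OF assms(2,3)]] by simp_all
    ultimately show False using \<open>r \<notin> Domain G\<close> by force
  qed
qed

lemma inverse_mem_adjoin:
  assumes "r \<notin> Domain G" and sq: "(r * r, r' * r') \<in> G" and a: "(a, a') \<in> adjoin r r'"
  shows "(inverse a, inverse a') \<in> adjoin r r'"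
proof (cases "a = 0")
  case True
  have "(0, 0) \<in> adjoin r r'" using subset_adjoin zero_mem by blast
  with a True have "a' = 0"
    using single_valued_adjoin[OF \<open>r \<notin> Domain G\<close>] by (auto dest: single_valuedD)
  with True show ?thesis using subset_adjoin zero_mem by auto
next
  case False
  obtain x x' y y' where a_eq: "a = x + y * r" "a' = x' + y' * r'" and xy: "(x, x') \<in> G" "(y, y') \<in> G"
    using a by (rule adjoin_memE)
  \<comment> \<open>multiply by the conjugate \<open>x - y * r\<close> and divide by the norm \<open>N\<close>\<close>
  define N where "N = x * x - y * y * (r * r)"
  define N' where "N' = x' * x' - y' * y' * (r' * r')"
  have N: "(N, N') \<in> G"
    unfolding N_def N'_def using diff_mem[OF mult_mem[OF xy(1) xy(1)] mult_mem[OF mult_mem[OF xy(2) xy(2)] sq]] .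
  have "N \<noteq> 0" using adjoin_norm_nonzero[OF \<open>r \<notin> Domain G\<close> xy] False a_eq unfolding N_def by simp
  then have "N' \<noteq> 0" using image_nonzero[OF N] by blast
  have "a * (x / N + (- y / N) * r) = N / N" "a' * (x' / N' + (- y' / N') * r') = N' / N'"
    unfolding a_eq N_def N'_def by (simp_all add: field_simps)
  with \<open>N \<noteq> 0\<close> \<open>N' \<noteq> 0\<close>
  have inv: "inverse a = x / N + (- y / N) * r" "inverse a' = x' / N' + (- y' / N') * r'"
    by (simp_all add: inverse_unique)
  have "(x / N, x' / N') \<in> G" "(- y / N, - y' / N') \<in> G"
    using divide_mem[OF xy(1) N] divide_mem[OF uminus_mem[OF xy(2)] N] by simp_all
  then show ?thesis unfolding inv by (rule adjoin_memI)
qed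

lemma field_hom_graph_adjoin:
  assumes "r \<notin> Domain G" and sq: "(r * r, r' * r') \<in> G"
  shows "field_hom_graph (adjoin r r')"
proof
  show "single_valued (adjoin r r')" using single_valued_adjoin[OF \<open>r \<notin> Domain G\<close>] .
  show "(1, 1) \<in> adjoin r r'" using one_mem subset_adjoin by blast
  fix a a' b b' assume a: "(a, a') \<in> adjoin r r'" and b: "(b, b') \<in> adjoin r r'"
  obtain x x' y y' where a_eq: "a = x + y * r" "a' = x' + y' * r'" and xy: "(x, x') \<in> G" "(y, y') \<in> G"
    using a by (rule adjoin_memE)
  obtain u u' v v' where b_eq: "b = u + v * r" "b' = u' + v' * r'" and uv: "(u, u') \<in> G" "(v, v') \<in> G"
    using b by (rule adjoin_memE)
  have "((x + u) + (y + v) * r, (x' + u') + (y' + v') * r') \<in> adjoin r r'"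
    using xy uv by (intro adjoin_memI add_mem)
  then show "(a + b, a' + b') \<in> adjoin r r'" unfolding a_eq b_eq by (simp add: algebra_simps)
  have "((x * u + y * v * (r * r)) + (x * v + y * u) * r,
      (x' * u' + y' * v' * (r' * r')) + (x' * v' + y' * u') * r') \<in> adjoin r r'"
    using add_mem[OF mult_mem[OF xy(1) uv(1)] mult_mem[OF mult_mem[OF xy(2) uv(2)] sq]]
      add_mem[OF mult_mem[OF xy(1) uv(2)] mult_mem[OF xy(2) uv(1)]] by (rule adjoin_memI)
  then show "(a * b, a' * b') \<in> adjoin r r'" unfolding a_eq b_eq by (simp add: algebra_simps)
next
  fix a a' assume a: "(a, a') \<in> adjoin r r'"
  then obtain x x' y y' where "a = x + y * r" "a' = x' + y' * r'" "(x, x') \<in> G" "(y, y') \<in> G"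
    by (rule adjoin_memE)
  then show "(- a, - a') \<in> adjoin r r'" using adjoin_memI[OF uminus_mem uminus_mem] by simp
  show "(inverse a, inverse a') \<in> adjoin r r'" using inverse_mem_adjoin[OF assms a] .
qed

lemma pythagorean_field_Domain:
  assumes maximal: "\<And>H. field_hom_graph H \<Longrightarrow> G \<subseteq> H \<Longrightarrow> H = G"
  shows "pythagorean_field (Domain G)"
proof
  fix x y assume "x \<in> Domain G" "y \<in> Domain G"
  then obtain x' y' where xy: "(x, x') \<in> G" "(y, y') \<in> G" by blast
  then show "x + y \<in> Domain G" "x * y \<in> Domain G" using add_mem mult_mem by blast+
  let ?r = "sqrt (x\<^sup>2 + y\<^sup>2)" and ?r' = "sqrt (x'\<^sup>2 + y'\<^sup>2)"
  \<comment> \<open>the image \<open>x'\<^sup>2 + y'\<^sup>2\<close> of \<open>?r * ?r\<close> is nonnegative, so adjoining \<open>?r \<mapsto> ?r'\<close> is possible\<close>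
  have sq: "(?r * ?r, ?r' * ?r') \<in> G"
    using add_mem[OF mult_mem[OF xy(1) xy(1)] mult_mem[OF xy(2) xy(2)]] by (simp add: power2_eq_square)
  show "?r \<in> Domain G"
  proof (rule ccontr)
    assume "?r \<notin> Domain G"
    then have "adjoin ?r ?r' = G" using maximal field_hom_graph_adjoin sq subset_adjoin by blast
    with \<open>?r \<notin> Domain G\<close> show False using generator_mem_adjoin by blast
  qed
next
  fix x assume "x \<in> Domain G"
  then show "- x \<in> Domain G" "inverse x \<in> Domain G" using uminus_mem inverse_mem by blast+
qed (use zero_mem one_mem in blast)+

end

lemma field_hom_graph_Union_chain:
  assumes "C \<noteq> {}" "\<And>H. H \<in> C \<Longrightarrow> field_hom_graph H"
    and chain: "\<And>H K. H \<in> C \<Longrightarrow> K \<in> C \<Longrightarrow> H \<subseteq> K \<or> K \<subseteq> H"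
  shows "field_hom_graph (\<Union>C)"
proof -
  have common: "\<exists>H\<in>C. p \<in> H \<and> q \<in> H" if "p \<in> \<Union>C" "q \<in> \<Union>C" for p q
    using that chain by blast
  show ?thesis
  proof
    show "single_valued (\<Union>C)"
    proof (rule single_valuedI)
      fix x y z assume "(x, y) \<in> \<Union>C" "(x, z) \<in> \<Union>C"
      with common obtain H where "H \<in> C" "(x, y) \<in> H" "(x, z) \<in> H" by blast
      then show "y = z" using field_hom_graph.image_unique[OF assms(2)] by blast
    qed
    show "(1, 1) \<in> \<Union>C" using assms(1) field_hom_graph.one_mem[OF assms(2)] by blast
  next
    fix x x' y y' assume "(x, x') \<in> \<Union>C" "(y, y') \<in> \<Union>C"
    with common obtain H where H: "H \<in> C" "(x, x') \<in> H" "(y, y') \<in> H" by blast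
    then show "(x + y, x' + y') \<in> \<Union>C" "(x * y, x' * y') \<in> \<Union>C"
      using field_hom_graph.add_mem[OF assms(2)] field_hom_graph.mult_mem[OF assms(2)] by blast+
  next
    fix x x' assume "(x, x') \<in> \<Union>C"
    then obtain H where "H \<in> C" "(x, x') \<in> H" by blast
    then show "(- x, - x') \<in> \<Union>C" "(inverse x, inverse x') \<in> \<Union>C"
      using field_hom_graph.uminus_mem[OF assms(2)] field_hom_graph.inverse_mem[OF assms(2)] by blast+
  qed
qed

lemma field_hom_graph_maximal_extension:
  assumes "field_hom_graph G"
  obtains M where "field_hom_graph M" "G \<subseteq> M" "\<And>H. field_hom_graph H \<Longrightarrow> M \<subseteq> H \<Longrightarrow> H = M"
proof -
  define \<A> where "\<A> = {H. field_hom_graph H \<and> G \<subseteq> H}"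
  have "\<Union>\<C> \<in> \<A>" if "\<C> \<noteq> {}" "subset.chain \<A> \<C>" for \<C>
  proof -
    from that(2) have "\<C> \<subseteq> \<A>" "\<And>H K. H \<in> \<C> \<Longrightarrow> K \<in> \<C> \<Longrightarrow> H \<subseteq> K \<or> K \<subseteq> H"
      unfolding subset_chain_def by blast+
    then have "field_hom_graph (\<Union>\<C>)"
      by (intro field_hom_graph_Union_chain[OF that(1)]) (auto simp: \<A>_def)
    moreover have "G \<subseteq> \<Union>\<C>" using that(1) \<open>\<C> \<subseteq> \<A>\<close> unfolding \<A>_def by blast
    ultimately show ?thesis unfolding \<A>_def by blast
  qed
  moreover have "\<A> \<noteq> {}" using assms unfolding \<A>_def by blast
  ultimately obtain M where "M \<in> \<A>" "\<And>H. H \<in> \<A> \<Longrightarrow> M \<subseteq> H \<Longrightarrow> H = M"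
    using subset_Zorn_nonempty[of \<A>] by blast
  then show thesis using that unfolding \<A>_def by blast
qed

lemma field_hom_graph_Id_on_Rats: "field_hom_graph (Id_on \<rat>)"
  by unfold_locales auto

lemma pythagorean_field_without_sqrt_1_plus_sqrt_2:
  obtains S where "pythagorean_field S" "sqrt (1 + sqrt 2) \<notin> S"
proof -
  \<comment> \<open>start from the conjugation \<open>sqrt 2 \<mapsto> - sqrt 2\<close> of \<open>\<rat>(sqrt 2)\<close>\<close>
  interpret Q: field_hom_graph "Id_on \<rat>" by (rule field_hom_graph_Id_on_Rats)
  have "field_hom_graph (Q.adjoin (sqrt 2) (- sqrt 2))"
    using sqrt_2_not_rat by (intro Q.field_hom_graph_adjoin) auto
  then obtain M where M: "field_hom_graph M" "Q.adjoin (sqrt 2) (- sqrt 2) \<subseteq> M"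
    and maximal: "\<And>H. field_hom_graph H \<Longrightarrow> M \<subseteq> H \<Longrightarrow> H = M"
    by (rule field_hom_graph_maximal_extension) blast
  interpret field_hom_graph M by (rule M(1))
  have "sqrt (1 + sqrt 2) \<notin> Domain M"
  proof
    assume "sqrt (1 + sqrt 2) \<in> Domain M"
    then obtain w where "(sqrt (1 + sqrt 2), w) \<in> M" by blast
    then have "(1 + sqrt 2, w * w) \<in> M" using mult_mem by fastforce
    moreover have "(1 + sqrt 2, 1 - sqrt 2) \<in> M"
      using add_mem[OF one_mem] M(2) Q.generator_mem_adjoin by fastforce
    ultimately have "w * w = 1 - sqrt 2" by (rule image_unique)
    moreover have "1 < sqrt (2::real)" by (simp add: real_less_rsqrt)
    moreover have "0 \<le> w * w" by simp
    ultimately show False by linarith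
  qed
  with pythagorean_field_Domain[OF maximal] show thesis by (rule that)
qed

theorem mainTheorem10:
  shows "origami_numbers \<subset> {x::real. complex_of_real x \<in> F_sqrt}"
proof -
  obtain S where S: "pythagorean_field S" "sqrt (1 + sqrt 2) \<notin> S"
    by (rule pythagorean_field_without_sqrt_1_plus_sqrt_2)
  have "origami_numbers \<subseteq> {x. complex_of_real x \<in> F_sqrt}"
    using pythagorean_field.origami_numbers_subset[OF pythagorean_field_constructible] .
  moreover have "sqrt (1 + sqrt 2) \<notin> origami_numbers"
    using pythagorean_field.origami_numbers_subset[OF S(1)] S(2) by blast
  moreover have "sqrt (1 + sqrt 2) \<in> {x. complex_of_real x \<in> F_sqrt}"
    using sqrt_1_plus_sqrt_2_constructible by simp
  ultimately show ?thesis by blast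
qed

end
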